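(* Let $n_*>2$ be an integer and let $\phi(b)=\upsilon\log b\,[\log\log b]^{1+\varepsilon}$ for $b\ge n_*+1$, with $\upsilon,\varepsilon>0$ such that $\phi(n_*+1)>1$. Let $\mathsf{G}\in\mathbb{G}(n_*,\phi)$. Then for any $\theta>0$ there exists $\underline{\alpha}\ge0$ (possibly depending on $\theta,n_*,\upsilon,\varepsilon$) such that $\mathit{\Theta}(\alpha,\theta)<\infty$ whenever $\alpha>\underline{\alpha}$.
   Context: All graphs $\mathsf{G}=(\mathsf{V},\mathsf{E})$ are countable, connected, locally finite and undirected; $n(x)$ is the degree of $x$, $\rho$ the path distance, $o\in\mathsf{V}$ a fixed root. For $\alpha,\theta>0$: $\mathit{\Theta}(\alpha,\theta)=\sum_{x\in\mathsf{V}}\sum_{y\sim x}[n(x)n(y)]^\theta\exp[-\alpha\rho(o,x)]$. For an integer $n_*>2$ put $\mathsf{V}_*=\{x:n(x)\le n_*\}$ and $\mathsf{V}_*^c=\mathsf{V}\setminus\mathsf{V}_*$. For a strictly increasing $\phi:(n_*,+\infty)\to(0,+\infty)$, the family $\mathbb{G}(n_*,\phi)$ consists of the graphs such that $\rho(x,y)\ge\phi[\max\{n(x),n(y)\}]$ for all $x,y\in\mathsf{V}_*^c$ (no condition if $x$ or $y$ lies in $\mathsf{V}_*$). *)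

theory Defs
  imports "HOL-Analysis.Analysis"
begin

definition ugraph :: "'a set \<Rightarrow> ('a \<Rightarrow> 'a \<Rightarrow> bool) \<Rightarrow> bool" where
  "ugraph V E \<longleftrightarrow> (\<forall>x y. E x y \<longrightarrow> x \<in> V \<and> y \<in> V \<and> E y x \<and> x \<noteq> y)"

definition walk_len :: "('a \<Rightarrow> 'a \<Rightarrow> bool) \<Rightarrow> nat \<Rightarrow> 'a \<Rightarrow> 'a \<Rightarrow> bool" where
  "walk_len E n x y \<longleftrightarrow> (\<exists>f. f 0 = x \<and> f n = y \<and> (\<forall>i<n. E (f i) (f (Suc i))))"

definition connected_graph :: "'a set \<Rightarrow> ('a \<Rightarrow> 'a \<Rightarrow> bool) \<Rightarrow> bool" where
  "connected_graph V E \<longleftrightarrow> (\<forall>x\<in>V. \<forall>y\<in>V. \<exists>n. walk_len E n x y)"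

definition locally_finite_graph :: "'a set \<Rightarrow> ('a \<Rightarrow> 'a \<Rightarrow> bool) \<Rightarrow> bool" where
  "locally_finite_graph V E \<longleftrightarrow> (\<forall>x\<in>V. finite {y. E x y})"

definition deg :: "('a \<Rightarrow> 'a \<Rightarrow> bool) \<Rightarrow> 'a \<Rightarrow> nat" where
  "deg E x = card {y. E x y}"

definition gdist :: "('a \<Rightarrow> 'a \<Rightarrow> bool) \<Rightarrow> 'a \<Rightarrow> 'a \<Rightarrow> nat" where
  "gdist E x y = (LEAST n. walk_len E n x y)"

definition Theta :: "'a set \<Rightarrow> ('a \<Rightarrow> 'a \<Rightarrow> bool) \<Rightarrow> 'a \<Rightarrow> real \<Rightarrow> real \<Rightarrow> ennreal" where
  "Theta V E r0 \<alpha> \<theta> =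
     (\<Sum>\<^sub>\<infinity>(x,y)\<in>{(x,y). x \<in> V \<and> E x y}.
        ennreal ((real (deg E x) * real (deg E y)) powr \<theta> * exp (- \<alpha> * real (gdist E r0 x))))"

definition in_GG :: "'a set \<Rightarrow> ('a \<Rightarrow> 'a \<Rightarrow> bool) \<Rightarrow> nat \<Rightarrow> (real \<Rightarrow> real) \<Rightarrow> bool" where
  "in_GG V E nstar \<phi> \<longleftrightarrow>
     (\<forall>x\<in>V. \<forall>y\<in>V. deg E x > nstar \<longrightarrow> deg E y > nstar \<longrightarrow> x \<noteq> y \<longrightarrow>
        real (gdist E x y) \<ge> \<phi> (real (max (deg E x) (deg E y))))"

end

theory Submission
  imports Defs
begin

text \<open>Since \<open>n\<^sub>* > 2\<close>, every degree \<open>b > n\<^sub>*\<close> satisfies \<open>\<phi>(b) \<ge> c ln b\<close> with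
  \<open>c = \<upsilon> (ln ln 4)^(1+\<epsilon>)\<close>, so distinct vertices of degree above \<open>n\<^sub>*\<close> have degrees at most
  \<open>exp(\<gamma> \<rho>(x,y))\<close> where \<open>\<gamma> = 1/c\<close>. Along a geodesic from the root, the degree of each
  high-degree vertex is therefore paid for by the distance to the next one, and the product of the
  degrees along a geodesic of length \<open>k\<close> is at most \<open>A n\<^sub>*^k exp(2\<gamma>k)\<close>. The geodesics of
  length \<open>k\<close> form a tree in which a vertex of degree \<open>d\<close> has at most \<open>d\<close> children, so the
  reciprocals of these products sum to at most 1, and the sphere of radius \<open>k\<close> has at most
  \<open>A n\<^sub>*^k exp(2\<gamma>k)\<close> vertices. Degrees also grow at most exponentially with the distance to
  the root, so \<open>\<Theta>(\<alpha>,\<theta>)\<close> is dominated by a geometric series once \<open>\<alpha>\<close> is large.\<close>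

lemma infsum_ennreal_lt_top_by_layers:
  fixes t :: "'b \<Rightarrow> real" and g :: "'b \<Rightarrow> nat"
  assumes t_nonneg: "\<And>z. t z \<ge> 0"
    and finite_layers: "\<And>k. finite {z\<in>P. g z = k}"
    and layer_sum: "\<And>k. (\<Sum>z\<in>{z\<in>P. g z = k}. t z) \<le> c k"
    and summable: "summable c"
  shows "(\<Sum>\<^sub>\<infinity>z\<in>P. ennreal (t z)) < \<infinity>"
proof -
  have c_nonneg: "c k \<ge> 0" for k
    using layer_sum[of k] sum_nonneg[of _ t] t_nonneg by (meson order_trans)
  have "(\<Sum>z\<in>F. t z) \<le> suminf c" if F: "finite F" "F \<subseteq> P" for F
  proof -
    have "(\<Sum>z\<in>F. t z) = (\<Sum>k\<in>g ` F. \<Sum>z\<in>{z\<in>F. g z = k}. t z)"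
      using F(1) by (rule sum.image_gen)
    also have "\<dots> \<le> (\<Sum>k\<in>g ` F. c k)"
    proof (rule sum_mono)
      fix k
      have "(\<Sum>z\<in>{z\<in>F. g z = k}. t z) \<le> (\<Sum>z\<in>{z\<in>P. g z = k}. t z)"
        using F finite_layers t_nonneg by (intro sum_mono2) auto
      then show "(\<Sum>z\<in>{z\<in>F. g z = k}. t z) \<le> c k"
        using layer_sum[of k] by linarith
    qed
    also have "\<dots> \<le> suminf c"
      using summable F c_nonneg by (intro sum_le_suminf) auto
    finally show ?thesis .
  qed
  then have "(\<Sum>\<^sub>\<infinity>z\<in>P. ennreal (t z)) \<le> ennreal (suminf c)"
    by (intro infsum_le_finite_sums nonneg_summable_on_complete)
      (auto simp: sum_ennreal t_nonneg intro: ennreal_leI)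
  also have "\<dots> < \<infinity>"
    by simp
  finally show ?thesis .
qed

lemma walk_len_0_iff [simp]: "walk_len E 0 x y \<longleftrightarrow> x = y"
  unfolding walk_len_def by auto

lemma walk_len_snoc:
  assumes "walk_len E n x y" and "E y z"
  shows "walk_len E (Suc n) x z"
proof -
  obtain f where f: "f 0 = x" "f n = y" "\<forall>i<n. E (f i) (f (Suc i))"
    using assms(1) unfolding walk_len_def by blast
  have "\<forall>i<Suc n. E ((f(Suc n := z)) i) ((f(Suc n := z)) (Suc i))"
    using f assms(2) less_Suc_eq by auto
  then show ?thesis
    unfolding walk_len_def using f by (intro exI[of _ "f(Suc n := z)"]) auto
qed

lemma walk_len_append:
  "walk_len E m x y \<Longrightarrow> walk_len E n y z \<Longrightarrow> walk_len E (m + n) x z"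
proof (induction n arbitrary: z)
  case 0
  then show ?case by simp
next
  case (Suc n)
  obtain f where f: "f 0 = y" "f (Suc n) = z" "\<forall>i<Suc n. E (f i) (f (Suc i))"
    using Suc.prems(2) unfolding walk_len_def by blast
  have "walk_len E n y (f n)"
    unfolding walk_len_def using f by auto
  with Suc have "walk_len E (m + n) x (f n)" by blast
  then show ?case using walk_len_snoc f by fastforce
qed

lemma walk_len_SucD: "walk_len E (Suc n) x y \<Longrightarrow> \<exists>z. walk_len E n x z \<and> E z y"
  unfolding walk_len_def by fastforce

lemma gdist_le_walk_len: "walk_len E n x y \<Longrightarrow> gdist E x y \<le> n"
  unfolding gdist_def by (rule Least_le)

lemma gdist_self [simp]: "gdist E x x = 0"
  using gdist_le_walk_len[of E 0 x x] by simp

definition deg_prod :: "('a \<Rightarrow> 'a \<Rightarrow> bool) \<Rightarrow> 'a list \<Rightarrow> real" where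
  "deg_prod E p = (\<Prod>v\<leftarrow>p. real (deg E v))"

lemma deg_prod_Nil [simp]: "deg_prod E [] = 1"
  and deg_prod_Cons [simp]: "deg_prod E (v # p) = real (deg E v) * deg_prod E p"
  unfolding deg_prod_def by simp_all

lemma deg_prod_nonneg: "deg_prod E p \<ge> 0"
  by (induction p) auto

text \<open>Geodesics from \<open>r\<close> are stored endpoint first: the \<open>i\<close>-th vertex from the end is at distance
  \<open>i\<close> from \<open>r\<close>.\<close>

primrec geodesics :: "('a \<Rightarrow> 'a \<Rightarrow> bool) \<Rightarrow> 'a \<Rightarrow> nat \<Rightarrow> 'a list set" where
  "geodesics E r 0 = {[r]}"
| "geodesics E r (Suc k) =
     (\<lambda>(p, y). y # p) ` (SIGMA p:geodesics E r k. {y. E (hd p) y \<and> gdist E r y = Suc k})"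

locale connected_lf_graph =
  fixes V :: "'a set" and E :: "'a \<Rightarrow> 'a \<Rightarrow> bool"
  assumes ugraph: "ugraph V E" and connected: "connected_graph V E"
    and locally_finite: "locally_finite_graph V E"
begin

lemma edge_in_V: "E x y \<Longrightarrow> x \<in> V \<and> y \<in> V"
  using ugraph unfolding ugraph_def by blast

lemma finite_neighbours: "x \<in> V \<Longrightarrow> finite {y. E x y}"
  using locally_finite unfolding locally_finite_graph_def by blast

lemma deg_pos: "E x y \<Longrightarrow> deg E x > 0"
  unfolding deg_def using finite_neighbours edge_in_V card_gt_0_iff by fastforce

lemma walk_len_gdist: "x \<in> V \<Longrightarrow> y \<in> V \<Longrightarrow> walk_len E (gdist E x y) x y"
  unfolding gdist_def using connected unfolding connected_graph_def by (meson LeastI_ex)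

lemma gdist_edge_le: "x \<in> V \<Longrightarrow> y \<in> V \<Longrightarrow> E y z \<Longrightarrow> gdist E x z \<le> gdist E x y + 1"
  using gdist_le_walk_len[OF walk_len_snoc[OF walk_len_gdist]] by simp

lemma gdist_triangle:
  "x \<in> V \<Longrightarrow> y \<in> V \<Longrightarrow> z \<in> V \<Longrightarrow> gdist E x z \<le> gdist E x y + gdist E y z"
  by (meson walk_len_gdist walk_len_append gdist_le_walk_len)

lemma gdist_eq_0D: "x \<in> V \<Longrightarrow> y \<in> V \<Longrightarrow> gdist E x y = 0 \<Longrightarrow> y = x"
  using walk_len_gdist[of x y] by simp

lemma gdist_SucE:
  assumes "x \<in> V" "y \<in> V" "gdist E x y = Suc k"
  obtains z where "E z y" "gdist E x z = k"
proof -
  obtain z where z: "walk_len E k x z" "E z y"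
    using assms walk_len_gdist walk_len_SucD by metis
  have "gdist E x z \<le> k"
    by (rule gdist_le_walk_len[OF z(1)])
  moreover have "gdist E x y \<le> gdist E x z + 1"
    using gdist_edge_le assms z edge_in_V by blast
  ultimately show thesis
    using that assms z by simp
qed

end

locale rooted_graph = connected_lf_graph +
  fixes r0 :: 'a
  assumes root: "r0 \<in> V"
begin

definition sphere :: "nat \<Rightarrow> 'a set" where
  "sphere k = {x\<in>V. gdist E r0 x = k}"

lemma geodesicsD:
  assumes "p \<in> geodesics E r0 k"
  shows "p \<noteq> [] \<and> set p \<subseteq> V \<and> gdist E r0 (hd p) = k \<and>
    (\<forall>z\<in>set p. gdist E z (hd p) + gdist E r0 z \<le> k)"
  using assms
proof (induction k arbitrary: p)
  case 0
  then show ?case using root by auto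
next
  case (Suc k)
  then obtain q y where q: "p = y # q" "q \<in> geodesics E r0 k" "E (hd q) y" "gdist E r0 y = Suc k"
    by auto
  note IH = Suc.IH[OF q(2)]
  have hd_q: "hd q \<in> V"
    using IH hd_in_set by blast
  have "gdist E z y + gdist E r0 z \<le> Suc k" if "z \<in> set q" for z
  proof -
    have "gdist E z y \<le> gdist E z (hd q) + 1"
      using gdist_edge_le IH that hd_q q(3) by blast
    then show ?thesis using IH that by fastforce
  qed
  then show ?case
    using q IH edge_in_V by auto
qed

lemma finite_geodesics_successors:
  assumes "p \<in> geodesics E r0 k"
  shows "finite {y. E (hd p) y \<and> gdist E r0 y = Suc k}"
proof -
  have "hd p \<in> V"
    using geodesicsD[OF assms] hd_in_set by blast
  then have "finite {y. E (hd p) y}"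
    by (rule finite_neighbours)
  then show ?thesis
    by (rule rev_finite_subset) auto
qed

lemma finite_geodesics: "finite (geodesics E r0 k)"
  by (induction k) (auto intro: finite_geodesics_successors)

lemma sphere_subset_hd_geodesics: "sphere k \<subseteq> hd ` geodesics E r0 k"
proof
  fix y assume "y \<in> sphere k"
  then show "y \<in> hd ` geodesics E r0 k"
  proof (induction k arbitrary: y)
    case 0
    then show ?case using gdist_eq_0D root by (auto simp: sphere_def)
  next
    case (Suc k)
    then have y: "y \<in> V" "gdist E r0 y = Suc k"
      by (auto simp: sphere_def)
    then obtain z where z: "E z y" "gdist E r0 z = k"
      using gdist_SucE root by blast
    then obtain p where p: "p \<in> geodesics E r0 k" "hd p = z"
      using Suc.IH edge_in_V by (auto simp: sphere_def)
    then have "(p, y) \<in> (SIGMA p:geodesics E r0 k. {y. E (hd p) y \<and> gdist E r0 y = Suc k})"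
      using z y by simp
    then have "y # p \<in> geodesics E r0 (Suc k)"
      unfolding geodesics.simps by (rule image_eqI[rotated]) simp
    then show ?case
      by (rule rev_image_eqI) simp
  qed
qed

lemma finite_sphere: "finite (sphere k)"
  by (rule finite_subset[OF sphere_subset_hd_geodesics finite_imageI[OF finite_geodesics]])

lemma deg_prod_tl_geodesic_pos: "p \<in> geodesics E r0 k \<Longrightarrow> deg_prod E (tl p) > 0"
proof (induction k arbitrary: p)
  case 0
  then show ?case by simp
next
  case (Suc k)
  then obtain q y where q: "p = y # q" "q \<in> geodesics E r0 k" "E (hd q) y"
    by auto
  then have "deg_prod E (tl p) = real (deg E (hd q)) * deg_prod E (tl q)"
    using geodesicsD[OF q(2)] by (cases q) auto
  then show ?case
    using Suc.IH[OF q(2)] deg_pos[OF q(3)] by simp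
qed

text \<open>The geodesics of length \<open>k + 1\<close> extending \<open>p\<close> number at most \<open>deg (hd p)\<close>, which is
  exactly the factor by which \<open>deg_prod\<close> of their tails exceeds that of \<open>tl p\<close>.\<close>

lemma sum_inverse_deg_prod_le_1: "(\<Sum>p\<in>geodesics E r0 k. 1 / deg_prod E (tl p)) \<le> 1"
proof (induction k)
  case 0
  then show ?case by simp
next
  case (Suc k)
  define Y where "Y p = {y. E (hd p) y \<and> gdist E r0 y = Suc k}" for p
  have inj: "inj_on (\<lambda>(p, y). y # p) (SIGMA p:geodesics E r0 k. Y p)"
    by (auto simp: inj_on_def)
  have "(\<Sum>p\<in>geodesics E r0 (Suc k). 1 / deg_prod E (tl p))
      = (\<Sum>(p, y)\<in>(SIGMA p:geodesics E r0 k. Y p). 1 / deg_prod E p)"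
    by (simp only: geodesics.simps Y_def[symmetric] sum.reindex[OF inj])
      (simp add: case_prod_beta)
  also have "\<dots> = (\<Sum>p\<in>geodesics E r0 k. real (card (Y p)) / deg_prod E p)"
    by (subst sum.Sigma[symmetric])
      (use finite_geodesics finite_geodesics_successors in \<open>auto simp: Y_def\<close>)
  also have "\<dots> \<le> (\<Sum>p\<in>geodesics E r0 k. 1 / deg_prod E (tl p))"
  proof (rule sum_mono)
    fix p assume p: "p \<in> geodesics E r0 k"
    then have hd_p: "hd p \<in> V" and p_Cons: "p = hd p # tl p"
      using geodesicsD[OF p] hd_in_set by auto
    have "card (Y p) \<le> deg E (hd p)"
      unfolding deg_def Y_def using finite_neighbours[OF hd_p] by (intro card_mono) auto
    then have "real (card (Y p)) / deg_prod E p \<le> real (deg E (hd p)) / deg_prod E p"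
      by (intro divide_right_mono) (auto simp: deg_prod_nonneg)
    also have "\<dots> \<le> 1 / deg_prod E (tl p)"
      using deg_prod_tl_geodesic_pos[OF p] by (subst p_Cons) (cases "deg E (hd p) = 0", auto)
    finally show "real (card (Y p)) / deg_prod E p \<le> 1 / deg_prod E (tl p)" .
  qed
  finally show ?case using Suc.IH by linarith
qed

lemma card_sphere_le:
  assumes bound: "\<And>p. p \<in> geodesics E r0 k \<Longrightarrow> deg_prod E (tl p) \<le> M" and "M > 0"
  shows "real (card (sphere k)) \<le> M"
proof -
  have "(\<Sum>p\<in>geodesics E r0 k. 1 / M) \<le> (\<Sum>p\<in>geodesics E r0 k. 1 / deg_prod E (tl p))"
    using bound deg_prod_tl_geodesic_pos \<open>M > 0\<close> by (intro sum_mono divide_left_mono) auto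
  then have "real (card (geodesics E r0 k)) / M \<le> 1"
    using sum_inverse_deg_prod_le_1[of k] by simp
  then have "real (card (geodesics E r0 k)) \<le> M"
    using \<open>M > 0\<close> by (simp add: divide_le_eq)
  moreover have "card (sphere k) \<le> card (geodesics E r0 k)"
    using sphere_subset_hd_geodesics finite_geodesics
    by (meson card_image_le card_mono finite_imageI le_trans)
  ultimately show ?thesis by linarith
qed

lemma deg_mult_deg_le:
  fixes \<gamma> :: real
  assumes "\<gamma> \<ge> 0" and deg_growth: "\<And>x. x \<in> V \<Longrightarrow> real (deg E x) \<le> A * exp (\<gamma> * gdist E r0 x)"
    and "x \<in> V" "E x y"
  shows "real (deg E x) * real (deg E y) \<le> A * A * exp \<gamma> * exp (2 * \<gamma> * gdist E r0 x)"
proof -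
  have "A \<ge> 0"
    using deg_growth[OF root] by simp
  have "real (gdist E r0 y) \<le> real (gdist E r0 x) + 1"
    using gdist_edge_le[OF root assms(3,4)] by linarith
  then have "exp (\<gamma> * gdist E r0 y) \<le> exp (\<gamma> * (gdist E r0 x + 1))"
    using \<open>\<gamma> \<ge> 0\<close> by (simp add: mult_left_mono)
  then have "real (deg E y) \<le> A * exp (\<gamma> * (gdist E r0 x + 1))"
    using deg_growth[of y] edge_in_V[OF assms(4)] \<open>A \<ge> 0\<close>
    by (meson mult_left_mono order_trans)
  then have "real (deg E x) * real (deg E y)
      \<le> A * exp (\<gamma> * gdist E r0 x) * (A * exp (\<gamma> * (gdist E r0 x + 1)))"
    using deg_growth[OF assms(3)] by (intro mult_mono) auto
  also have "\<dots> = A * A * exp \<gamma> * exp (2 * \<gamma> * gdist E r0 x)"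
    by (simp add: mult_exp_exp algebra_simps)
  finally show ?thesis .
qed

lemma card_edges_from_sphere_le:
  fixes \<gamma> :: real
  assumes "\<gamma> \<ge> 0" and deg_growth: "\<And>x. x \<in> V \<Longrightarrow> real (deg E x) \<le> A * exp (\<gamma> * gdist E r0 x)"
    and sphere_growth: "real (card (sphere k)) \<le> C * exp (\<kappa> * k)"
  shows "real (card (SIGMA x:sphere k. {y. E x y})) \<le> C * A * exp ((\<kappa> + \<gamma>) * k)"
proof -
  have "A \<ge> 0"
    using deg_growth[OF root] by simp
  have "real (card (SIGMA x:sphere k. {y. E x y})) = (\<Sum>x\<in>sphere k. real (deg E x))"
    using finite_sphere finite_neighbours by (subst card_SigmaI) (auto simp: deg_def sphere_def)
  also have "\<dots> \<le> real (card (sphere k)) * (A * exp (\<gamma> * k))"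
    using deg_growth by (intro sum_bounded_above) (auto simp: sphere_def)
  also have "\<dots> \<le> C * exp (\<kappa> * k) * (A * exp (\<gamma> * k))"
    using sphere_growth \<open>A \<ge> 0\<close> by (intro mult_right_mono) auto
  also have "\<dots> = C * A * exp ((\<kappa> + \<gamma>) * k)"
    by (simp add: mult_exp_exp algebra_simps)
  finally show ?thesis .
qed

lemma Theta_finite_if_exponential_growth:
  fixes \<gamma> :: real
  assumes "\<gamma> \<ge> 0" "\<theta> > 0"
    and deg_growth: "\<And>x. x \<in> V \<Longrightarrow> real (deg E x) \<le> A * exp (\<gamma> * gdist E r0 x)"
    and sphere_growth: "\<And>k. real (card (sphere k)) \<le> C * exp (\<kappa> * k)"
    and large: "\<alpha> > \<kappa> + \<gamma> + 2 * \<gamma> * \<theta>"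
  shows "Theta V E r0 \<alpha> \<theta> < \<infinity>"
proof -
  define t where "t = (\<lambda>(x, y). (real (deg E x) * real (deg E y)) powr \<theta> * exp (- \<alpha> * gdist E r0 x))"
  define P where "P = {(x, y). x \<in> V \<and> E x y}"
  define \<delta> where "\<delta> = \<kappa> + \<gamma> + 2 * \<gamma> * \<theta> - \<alpha>"
  define c where "c k = C * A * (A * A * exp \<gamma>) powr \<theta> * exp \<delta> ^ k" for k
  have t_nonneg: "t z \<ge> 0" for z
    by (simp add: t_def case_prod_beta)
  have C: "C \<ge> 0"
    using sphere_growth[of 0] by simp
  have layer: "{z\<in>P. gdist E r0 (fst z) = k} = (SIGMA x:sphere k. {y. E x y})" for k
    by (auto simp: P_def sphere_def)
  have t_le: "t z \<le> (A * A * exp \<gamma>) powr \<theta> * exp ((2 * \<gamma> * \<theta> - \<alpha>) * k)"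
    if z: "z \<in> (SIGMA x:sphere k. {y. E x y})" for z k
  proof -
    obtain x y where xy: "z = (x, y)" "x \<in> V" "E x y" "gdist E r0 x = k"
      using z by (cases z) (auto simp: sphere_def)
    have "(real (deg E x) * real (deg E y)) powr \<theta> \<le> (A * A * exp \<gamma> * exp (2 * \<gamma> * k)) powr \<theta>"
      using deg_mult_deg_le[OF \<open>\<gamma> \<ge> 0\<close> deg_growth xy(2,3)] xy(4) \<open>\<theta> > 0\<close>
      by (intro powr_mono2) auto
    also have "\<dots> = (A * A * exp \<gamma>) powr \<theta> * exp (2 * \<gamma> * \<theta> * k)"
      by (simp add: powr_mult exp_powr_real algebra_simps)
    finally have "t z \<le> (A * A * exp \<gamma>) powr \<theta> * exp (2 * \<gamma> * \<theta> * k) * exp (- \<alpha> * k)"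
      using xy by (simp add: t_def mult_right_mono)
    moreover have "exp (2 * \<gamma> * \<theta> * k) * exp (- \<alpha> * k) = exp ((2 * \<gamma> * \<theta> - \<alpha>) * k)"
      by (simp add: mult_exp_exp algebra_simps)
    ultimately show ?thesis
      by (simp only: mult.assoc)
  qed
  have "(\<Sum>z\<in>{z\<in>P. gdist E r0 (fst z) = k}. t z) \<le> c k" for k
  proof -
    have "(\<Sum>z\<in>{z\<in>P. gdist E r0 (fst z) = k}. t z)
        \<le> real (card (SIGMA x:sphere k. {y. E x y})) * ((A * A * exp \<gamma>) powr \<theta> * exp ((2 * \<gamma> * \<theta> - \<alpha>) * k))"
      unfolding layer using t_le by (intro sum_bounded_above) auto
    also have "\<dots> \<le> C * A * exp ((\<kappa> + \<gamma>) * k) * ((A * A * exp \<gamma>) powr \<theta> * exp ((2 * \<gamma> * \<theta> - \<alpha>) * k))"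
      using card_edges_from_sphere_le[OF \<open>\<gamma> \<ge> 0\<close> deg_growth sphere_growth] by (intro mult_right_mono) auto
    also have "\<dots> = c k"
      by (simp add: c_def \<delta>_def mult_exp_exp exp_of_nat_mult[symmetric] algebra_simps)
    finally show ?thesis .
  qed
  moreover have "summable c"
    unfolding c_def using large by (intro summable_mult summable_geometric) (simp add: \<delta>_def)
  moreover have "finite {z\<in>P. gdist E r0 (fst z) = k}" for k
    unfolding layer using finite_sphere finite_neighbours by (auto simp: sphere_def)
  ultimately have "(\<Sum>\<^sub>\<infinity>z\<in>P. ennreal (t z)) < \<infinity>"
    using t_nonneg by (intro infsum_ennreal_lt_top_by_layers)
  moreover have "Theta V E r0 \<alpha> \<theta> = (\<Sum>\<^sub>\<infinity>z\<in>P. ennreal (t z))"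
    unfolding Theta_def P_def t_def by (rule infsum_cong) (simp split: prod.splits)
  ultimately show ?thesis
    by simp
qed

end

definition deg_separated :: "'a set \<Rightarrow> ('a \<Rightarrow> 'a \<Rightarrow> bool) \<Rightarrow> nat \<Rightarrow> real \<Rightarrow> bool" where
  "deg_separated V E n \<gamma> \<longleftrightarrow>
     (\<forall>x\<in>V. \<forall>y\<in>V. deg E x > n \<longrightarrow> deg E y > n \<longrightarrow> x \<noteq> y \<longrightarrow>
        real (max (deg E x) (deg E y)) \<le> exp (\<gamma> * gdist E x y))"

lemma in_GG_imp_deg_separated:
  assumes GG: "in_GG V E n \<phi>" and "c > 0"
    and phi_ge: "\<And>b. b \<ge> real n + 1 \<Longrightarrow> c * ln b \<le> \<phi> b"
  shows "deg_separated V E n (1 / c)"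
  unfolding deg_separated_def
proof (intro ballI impI)
  fix x y assume xy: "x \<in> V" "y \<in> V" "deg E x > n" "deg E y > n" "x \<noteq> y"
  define b where "b = real (max (deg E x) (deg E y))"
  have "b \<ge> real n + 1"
    unfolding b_def using xy by auto
  then have "c * ln b \<le> real (gdist E x y)"
    using phi_ge GG xy unfolding in_GG_def b_def by (meson order_trans)
  then have "ln b \<le> 1 / c * gdist E x y"
    using \<open>c > 0\<close> by (simp add: field_simps)
  then have "exp (ln b) \<le> exp (1 / c * gdist E x y)"
    by simp
  then show "b \<le> exp (1 / c * gdist E x y)"
    using \<open>b \<ge> real n + 1\<close> by simp
qed

lemma ln_ln_4_pos: "ln (ln (4::real)) > 0"
proof -
  have "exp 1 < (4::real)"
    using exp_le by linarith
  then have "ln (exp 1) < ln (4::real)"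
    by (subst ln_less_cancel_iff) auto
  then show ?thesis
    by simp
qed

lemma ln_mult_ln_ln_powr_ge:
  fixes b \<upsilon> q :: real
  assumes "\<upsilon> \<ge> 0" "q \<ge> 0" "b \<ge> 4"
  shows "\<upsilon> * ln (ln 4) powr q * ln b \<le> \<upsilon> * ln b * ln (ln b) powr q"
proof -
  have "ln (ln 4) powr q \<le> ln (ln b) powr q"
    using assms ln_ln_4_pos by (intro powr_mono2) auto
  then have "\<upsilon> * ln b * ln (ln 4) powr q \<le> \<upsilon> * ln b * ln (ln b) powr q"
    using assms by (intro mult_left_mono) auto
  then show ?thesis
    by (simp only: mult_ac)
qed

fun last_high :: "('a \<Rightarrow> 'a \<Rightarrow> bool) \<Rightarrow> nat \<Rightarrow> 'a list \<Rightarrow> 'a option" where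
  "last_high E n [] = None"
| "last_high E n (y # p) = (if deg E y > n then Some y else last_high E n p)"

lemma last_high_SomeD: "last_high E n p = Some h \<Longrightarrow> h \<in> set p \<and> deg E h > n"
  by (induction p) (auto split: if_splits)

locale separated_graph = rooted_graph V E r0 for V :: "'a set" and E r0 +
  fixes n :: nat and \<gamma> :: real
  assumes n_ge_1: "n \<ge> 1" and \<gamma>_pos: "\<gamma> > 0"
    and separated: "deg_separated V E n \<gamma>"
begin

lemma deg_le_exp_gdist:
  "x \<in> V \<Longrightarrow> y \<in> V \<Longrightarrow> x \<noteq> y \<Longrightarrow> deg E x > n \<Longrightarrow> deg E y > n \<Longrightarrow>
    real (deg E x) \<le> exp (\<gamma> * gdist E x y) \<and> real (deg E y) \<le> exp (\<gamma> * gdist E x y)"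
  using separated unfolding deg_separated_def by (metis max.bounded_iff of_nat_max)

text \<open>The degree of the last high-degree vertex \<open>h\<close> of a geodesic is not yet paid for; once the
  next high-degree vertex \<open>y\<close> is reached it is at most \<open>exp(\<gamma> \<rho>(h,y))\<close>.\<close>

definition high_weight :: "'a list \<Rightarrow> real" where
  "high_weight p = (case last_high E n p of
     None \<Rightarrow> 1
   | Some h \<Rightarrow> exp (\<gamma> * gdist E r0 h) * real (deg E h))"

lemma high_weight_le_exp_Suc:
  assumes q: "q \<in> geodesics E r0 k" and y: "E (hd q) y" "gdist E r0 y = Suc k" "deg E y > n"
  shows "high_weight q \<le> exp (\<gamma> * Suc k)"
proof (cases "last_high E n q")
  case None
  then show ?thesis using \<gamma>_pos by (simp add: high_weight_def)
next
  case (Some h)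
  then have h: "h \<in> set q" "deg E h > n"
    using last_high_SomeD[OF Some] by auto
  have h_on_q: "h \<in> V" "gdist E h (hd q) + gdist E r0 h \<le> k"
    using geodesicsD[OF q] h by auto
  have "gdist E h y \<le> gdist E h (hd q) + 1"
    using gdist_edge_le h_on_q y(1) edge_in_V by blast
  then have d: "real (gdist E r0 h) + real (gdist E h y) \<le> Suc k"
    using h_on_q by linarith
  have "h \<noteq> y"
    using h_on_q y(2) by auto
  then have "real (deg E h) \<le> exp (\<gamma> * gdist E h y)"
    using deg_le_exp_gdist h h_on_q y edge_in_V by blast
  then have "high_weight q \<le> exp (\<gamma> * gdist E r0 h) * exp (\<gamma> * gdist E h y)"
    using Some by (simp add: high_weight_def)
  also have "\<dots> \<le> exp (\<gamma> * Suc k)"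
    using d \<gamma>_pos by (simp add: mult_exp_exp flip: distrib_left)
  finally show ?thesis .
qed

lemma deg_prod_le_high_weight:
  "p \<in> geodesics E r0 k \<Longrightarrow> deg_prod E p \<le> real n ^ (k + 1) * high_weight p"
proof (induction k arbitrary: p)
  case 0
  then show ?case using n_ge_1 by (auto simp: high_weight_def)
next
  case (Suc k)
  then obtain q y where q: "p = y # q" "q \<in> geodesics E r0 k" "E (hd q) y" "gdist E r0 y = Suc k"
    by auto
  note IH = Suc.IH[OF q(2)]
  show ?case
  proof (cases "deg E y > n")
    case False
    then have "real (deg E y) \<le> real n"
      by simp
    then have "deg_prod E p \<le> real n * (real n ^ (k + 1) * high_weight q)"
      unfolding q(1) deg_prod_Cons using IH deg_prod_nonneg by (intro mult_mono) auto
    then show ?thesis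
      using False q(1) by (simp add: high_weight_def)
  next
    case True
    have "deg_prod E q \<le> real n ^ (k + 1) * exp (\<gamma> * Suc k)"
      using IH high_weight_le_exp_Suc[OF q(2,3,4) True]
      by (meson mult_left_mono order_trans of_nat_0_le_iff zero_le_power)
    then have "deg_prod E p \<le> real (deg E y) * (real n ^ (k + 1) * exp (\<gamma> * Suc k))"
      using q(1) by (simp add: mult_left_mono)
    also have "\<dots> \<le> real n * (real (deg E y) * (real n ^ (k + 1) * exp (\<gamma> * Suc k)))"
      using n_ge_1 mult_right_mono[of 1 "real n" "real (deg E y) * (real n ^ (k + 1) * exp (\<gamma> * Suc k))"]
      by simp
    also have "\<dots> = real n ^ (Suc k + 1) * (exp (\<gamma> * Suc k) * real (deg E y))"
      by (simp add: algebra_simps)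
    finally show ?thesis
      using True q(1,4) by (simp add: high_weight_def)
  qed
qed

lemma deg_growth: "\<exists>A\<ge>1. \<forall>x\<in>V. real (deg E x) \<le> A * exp (\<gamma> * gdist E r0 x)"
proof (cases "\<exists>z\<in>V. deg E z > n")
  case False
  have "real (deg E x) \<le> real n * exp (\<gamma> * gdist E r0 x)" if "x \<in> V" for x
  proof -
    have "real (deg E x) \<le> real n"
      using False that by (simp add: not_less)
    also have "\<dots> \<le> real n * exp (\<gamma> * gdist E r0 x)"
      using \<gamma>_pos by (simp add: mult_le_cancel_left1)
    finally show ?thesis .
  qed
  then show ?thesis using n_ge_1 by (intro exI[of _ "real n"]) auto
next
  case True
  then obtain z where z: "z \<in> V" "deg E z > n" by blast
  define A where "A = max (real n) (max (real (deg E z)) (exp (\<gamma> * gdist E z r0)))"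
  have "A \<ge> 1"
    using n_ge_1 unfolding A_def by auto
  have "real (deg E x) \<le> A * exp (\<gamma> * gdist E r0 x)" if x: "x \<in> V" for x
  proof (cases "deg E x \<le> n \<or> x = z")
    case True
    then have "real (deg E x) \<le> A"
      unfolding A_def by auto
    also have "\<dots> \<le> A * exp (\<gamma> * gdist E r0 x)"
      using \<open>A \<ge> 1\<close> \<gamma>_pos by simp
    finally show ?thesis .
  next
    case False
    then have "real (deg E x) \<le> exp (\<gamma> * gdist E z x)"
      using deg_le_exp_gdist x z by auto
    also have "\<dots> \<le> exp (\<gamma> * (real (gdist E z r0) + real (gdist E r0 x)))"
      using gdist_triangle[OF z(1) root x] \<gamma>_pos by simp
    also have "\<dots> = exp (\<gamma> * gdist E z r0) * exp (\<gamma> * gdist E r0 x)"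
      by (simp add: mult_exp_exp distrib_left)
    also have "\<dots> \<le> A * exp (\<gamma> * gdist E r0 x)"
      unfolding A_def by (intro mult_right_mono) auto
    finally show ?thesis .
  qed
  then show ?thesis using \<open>A \<ge> 1\<close> by blast
qed

lemma high_weight_le:
  assumes "A \<ge> 1" and deg_growth: "\<And>x. x \<in> V \<Longrightarrow> real (deg E x) \<le> A * exp (\<gamma> * gdist E r0 x)"
    and p: "p \<in> geodesics E r0 k"
  shows "high_weight p \<le> A * exp (2 * \<gamma> * k)"
proof (cases "last_high E n p")
  case None
  have "A \<le> A * exp (2 * \<gamma> * k)"
    using \<open>A \<ge> 1\<close> \<gamma>_pos by (simp add: mult_le_cancel_left1)
  then have "1 \<le> A * exp (2 * \<gamma> * k)"
    using \<open>A \<ge> 1\<close> by linarith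
  then show ?thesis
    using None by (simp add: high_weight_def)
next
  case (Some h)
  then have "h \<in> set p"
    using last_high_SomeD[OF Some] by blast
  then have h: "h \<in> V" "real (gdist E r0 h) \<le> k"
    using geodesicsD[OF p] by fastforce+
  have "high_weight p \<le> exp (\<gamma> * gdist E r0 h) * (A * exp (\<gamma> * gdist E r0 h))"
    using Some deg_growth[OF h(1)] by (simp add: high_weight_def)
  also have "\<dots> = A * exp (2 * \<gamma> * gdist E r0 h)"
    by (simp add: mult_exp_exp algebra_simps)
  also have "\<dots> \<le> A * exp (2 * \<gamma> * k)"
    using \<open>A \<ge> 1\<close> \<gamma>_pos h(2) by simp
  finally show ?thesis .
qed

lemma deg_prod_tl_le:
  assumes "A \<ge> 1" and deg_growth: "\<And>x. x \<in> V \<Longrightarrow> real (deg E x) \<le> A * exp (\<gamma> * gdist E r0 x)"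
    and p: "p \<in> geodesics E r0 k"
  shows "deg_prod E (tl p) \<le> real n ^ k * (A * exp (2 * \<gamma> * k))"
proof (cases k)
  case 0
  then show ?thesis using p \<open>A \<ge> 1\<close> by simp
next
  case (Suc j)
  then obtain y q where q: "p = y # q" "q \<in> geodesics E r0 j"
    using p by auto
  have "deg_prod E (tl p) \<le> real n ^ k * high_weight q"
    using deg_prod_le_high_weight[OF q(2)] q(1) Suc by simp
  also have "\<dots> \<le> real n ^ k * (A * exp (2 * \<gamma> * j))"
    using high_weight_le[OF assms(1,2) q(2)] by (simp add: mult_left_mono)
  also have "\<dots> \<le> real n ^ k * (A * exp (2 * \<gamma> * k))"
    using Suc \<gamma>_pos \<open>A \<ge> 1\<close> by (simp add: mult_left_mono)
  finally show ?thesis .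
qed

lemma sphere_growth:
  assumes "A \<ge> 1" and deg_growth: "\<And>x. x \<in> V \<Longrightarrow> real (deg E x) \<le> A * exp (\<gamma> * gdist E r0 x)"
  shows "real (card (sphere k)) \<le> A * exp ((ln (real n) + 2 * \<gamma>) * k)"
proof -
  have "real n ^ k = exp (ln (real n) * k)"
    using n_ge_1 by (subst mult.commute) (simp add: exp_of_nat_mult)
  then have growth: "real n ^ k * (A * exp (2 * \<gamma> * k)) = A * exp ((ln (real n) + 2 * \<gamma>) * k)"
    by (simp add: mult_exp_exp algebra_simps)
  show ?thesis
  proof (rule card_sphere_le)
    show "deg_prod E (tl p) \<le> A * exp ((ln (real n) + 2 * \<gamma>) * k)" if "p \<in> geodesics E r0 k" for p
      using deg_prod_tl_le[OF assms that] unfolding growth .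
    show "A * exp ((ln (real n) + 2 * \<gamma>) * k) > 0"
      using \<open>A \<ge> 1\<close> by simp
  qed
qed

lemma Theta_finite:
  assumes "\<theta> > 0"
  shows "\<exists>\<alpha>0\<ge>0. \<forall>\<alpha>>\<alpha>0. Theta V E r0 \<alpha> \<theta> < \<infinity>"
proof -
  obtain A where "A \<ge> 1" and deg_growth: "\<And>x. x \<in> V \<Longrightarrow> real (deg E x) \<le> A * exp (\<gamma> * gdist E r0 x)"
    using deg_growth by blast
  have "ln (real n) + 3 * \<gamma> + 2 * \<gamma> * \<theta> \<ge> 0"
    using n_ge_1 \<gamma>_pos \<open>\<theta> > 0\<close> by simp
  moreover have "Theta V E r0 \<alpha> \<theta> < \<infinity>" if "\<alpha> > ln (real n) + 3 * \<gamma> + 2 * \<gamma> * \<theta>" for \<alpha>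
    using that \<gamma>_pos \<open>\<theta> > 0\<close> sphere_growth[OF \<open>A \<ge> 1\<close> deg_growth]
    by (intro Theta_finite_if_exponential_growth[OF _ _ deg_growth]) auto
  ultimately show ?thesis
    by blast
qed

end

theorem theorem5p2:
  fixes V :: "'a set" and E :: "'a \<Rightarrow> 'a \<Rightarrow> bool" and r0 :: 'a
    and nstar :: nat and \<upsilon> \<epsilon> :: real and \<phi> :: "real \<Rightarrow> real"
  assumes graph: "ugraph V E" and cnt: "countable V" and conn: "connected_graph V E"
    and lf: "locally_finite_graph V E" and root: "r0 \<in> V"
    and nstar: "nstar > 2"
    and pos: "\<upsilon> > 0" "\<epsilon> > 0"
    and phi_def: "\<And>b. b \<ge> real nstar + 1 \<Longrightarrow> \<phi> b = \<upsilon> * ln b * (ln (ln b)) powr (1 + \<epsilon>)"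
    and phi1: "\<phi> (real nstar + 1) > 1"
    and GG: "in_GG V E nstar \<phi>"
  shows "\<forall>\<theta>>0. \<exists>\<alpha>0\<ge>0. \<forall>\<alpha>>\<alpha>0. Theta V E r0 \<alpha> \<theta> < \<infinity>"
proof -
  define c where "c = \<upsilon> * ln (ln 4) powr (1 + \<epsilon>)"
  have "c > 0"
    using pos ln_ln_4_pos by (simp add: c_def)
  have "c * ln b \<le> \<phi> b" if "b \<ge> real nstar + 1" for b
  proof -
    have "b \<ge> 4"
      using that nstar by linarith
    then show ?thesis
      using ln_mult_ln_ln_powr_ge[of \<upsilon> "1 + \<epsilon>" b] phi_def[OF that] pos by (simp add: c_def)
  qed
  then have "deg_separated V E nstar (1 / c)"
    by (rule in_GG_imp_deg_separated[OF GG \<open>c > 0\<close>])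
  then interpret separated_graph V E r0 nstar "1 / c"
    using graph conn lf root nstar \<open>c > 0\<close> by unfold_locales auto
  show ?thesis
    using Theta_finite by blast
qed

end
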